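(* Let $G=(U,V,E)$ be a path-restricted ordered bipartite graph and let $v$ be a vertex of $G$. Then the subgraph of $G$ induced by the vertex set of $T_r(v)$ has exactly $n-1$ edges, where $n$ is the number of vertices spanned by $T_r(v)$.
   Context: An ordered bipartite graph is $G=(U,V,E)$ where $U,V$ are disjoint finite sets, each carrying a strict total order (both written $<$), and $E\subseteq U\times V$. A path is a sequence of edges in which consecutive edges share a vertex. A path visiting the vertices of $U$ in the order $u_1,\dots,u_k$ and those of $V$ in the order $v_1,\dots,v_l$ is a forward path if either $u_1<\dots<u_k$ and $v_1<\dots<v_l$, or $u_1>\dots>u_k$ and $v_1>\dots>v_l$. For $x\le y$ in $U$ write $\langle x,y\rangle=\{u\in U: x\le u\le y\}$, and similarly in $V$. If $u_a<u_b$ are the smallest and largest $U$-vertices and $v_c<v_d$ the smallest and largest $V$-vertices of a forward path $P$, the range of $P$ is $\{\langle u_a,u_b\rangle,\langle v_c,v_d\rangle\}$. A vertex of $P$ is non-terminal if it is adjacent along $P$ to two vertices of $P$. An edge is a back edge to $P$ if either it is $(u_a,v_j)$ with $v_j\in\langle v_c,v_d\rangle$ and $v_j>v'$ for some non-terminal vertex $v'\in V$ of $P$, or it is $(u_i,v_c)$ with $u_i\in\langle u_a,u_b\rangle$ and $u_i>u'$ for some non-terminal vertex $u'\in U$ of $P$. $G$ is a path-restricted ordered bipartite graph (PRBG) if no forward path in $G$ has a back edge in $E$. $T_r(v)$ denotes the subgraph formed by the union of all forward paths starting at $v$ along which the orders of the visited vertices decrease (in both $U$ and $V$); its vertices are said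 to be spanned by $T_r(v)$. *)

theory Defs
  imports Main
begin

(* Ordered bipartite graph: U :: 'u set, V :: 'v set (disjoint via the sum type 'u + 'v),
   orders given by the linorder instances of 'u and 'v, edges E \<subseteq> U \<times> V. *)

definition linked :: "('u \<times> 'v) set \<Rightarrow> 'u + 'v \<Rightarrow> 'u + 'v \<Rightarrow> bool" where
  "linked E x y \<longleftrightarrow> (\<exists>u w. (u, w) \<in> E \<and> ((x = Inl u \<and> y = Inr w) \<or> (x = Inr w \<and> y = Inl u)))"

definition is_path :: "('u \<times> 'v) set \<Rightarrow> ('u + 'v) list \<Rightarrow> bool" where
  "is_path E ps \<longleftrightarrow> ps \<noteq> [] \<and> (\<forall>i. Suc i < length ps \<longrightarrow> linked E (ps ! i) (ps ! Suc i))"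

definition U_seq :: "('u + 'v) list \<Rightarrow> 'u list" where
  "U_seq ps = [u. Inl u \<leftarrow> ps]"

definition V_seq :: "('u + 'v) list \<Rightarrow> 'v list" where
  "V_seq ps = [w. Inr w \<leftarrow> ps]"

definition increasing_path :: "('u::linorder + 'v::linorder) list \<Rightarrow> bool" where
  "increasing_path ps \<longleftrightarrow> sorted_wrt (<) (U_seq ps) \<and> sorted_wrt (<) (V_seq ps)"

definition decreasing_path :: "('u::linorder + 'v::linorder) list \<Rightarrow> bool" where
  "decreasing_path ps \<longleftrightarrow> sorted_wrt (>) (U_seq ps) \<and> sorted_wrt (>) (V_seq ps)"

definition forward_path :: "('u::linorder \<times> 'v::linorder) set \<Rightarrow> ('u + 'v) list \<Rightarrow> bool" where
  "forward_path E ps \<longleftrightarrow> is_path E ps \<and> (increasing_path ps \<or> decreasing_path ps)"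

definition non_terminal :: "('u + 'v) list \<Rightarrow> 'u + 'v \<Rightarrow> bool" where
  "non_terminal ps x \<longleftrightarrow> (\<exists>i. 0 < i \<and> Suc i < length ps \<and> ps ! i = x)"

definition back_edge :: "('u::linorder + 'v::linorder) list \<Rightarrow> 'u \<times> 'v \<Rightarrow> bool" where
  "back_edge ps e \<longleftrightarrow>
     (let ua = Min (set (U_seq ps)); ub = Max (set (U_seq ps));
          vc = Min (set (V_seq ps)); vd = Max (set (V_seq ps)) in
      (fst e = ua \<and> vc \<le> snd e \<and> snd e \<le> vd \<and> (\<exists>v'. non_terminal ps (Inr v') \<and> snd e > v'))
    \<or> (snd e = vc \<and> ua \<le> fst e \<and> fst e \<le> ub \<and> (\<exists>u'. non_terminal ps (Inl u') \<and> fst e > u')))"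

definition PRBG :: "'u::linorder set \<Rightarrow> 'v::linorder set \<Rightarrow> ('u \<times> 'v) set \<Rightarrow> bool" where
  "PRBG U V E \<longleftrightarrow> finite U \<and> finite V \<and> E \<subseteq> U \<times> V \<and>
     (\<forall>ps e. forward_path E ps \<and> e \<in> E \<longrightarrow> \<not> back_edge ps e)"

definition Tr_verts :: "('u::linorder \<times> 'v::linorder) set \<Rightarrow> 'u + 'v \<Rightarrow> ('u + 'v) set" where
  "Tr_verts E v = {x. \<exists>ps. is_path E ps \<and> hd ps = v \<and> decreasing_path ps \<and> x \<in> set ps}"

definition induced_edges :: "('u \<times> 'v) set \<Rightarrow> ('u + 'v) set \<Rightarrow> ('u \<times> 'v) set" where
  "induced_edges E S = {(u, w) \<in> E. Inl u \<in> S \<and> Inr w \<in> S}"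

end

theory Submission
  imports Defs
begin

text \<open>In a PRBG a decreasing path from \<open>v\<close> to a vertex \<open>x\<close> is unique: where two such
  paths first differ when read backwards from \<open>x\<close>, one of them admits a back edge. So every
  \<open>x \<noteq> v\<close> spanned by \<open>T\<^sub>r(v)\<close> has a parent, its predecessor on that path. Every edge
  \<open>a b\<close> of the induced subgraph joins a vertex to its parent: if neither path extends by the
  other endpoint, the edge is again a back edge. Hence sending each induced edge to its endpoint
  farther from \<open>v\<close> is a bijection onto the spanned vertices other than \<open>v\<close>.\<close>

lemma U_seq_simps [simp]:
  "U_seq [] = []" "U_seq (Inl u # ps) = u # U_seq ps" "U_seq (Inr w # ps) = U_seq ps"
  "U_seq (xs @ ys) = U_seq xs @ U_seq ys"
  by (simp_all add: U_seq_def)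

lemma V_seq_simps [simp]:
  "V_seq [] = []" "V_seq (Inr w # ps) = w # V_seq ps" "V_seq (Inl u # ps) = V_seq ps"
  "V_seq (xs @ ys) = V_seq xs @ V_seq ys"
  by (simp_all add: V_seq_def)

lemma U_seq_rev [simp]: "U_seq (rev ps) = rev (U_seq ps)"
  by (induction ps) (auto simp: U_seq_def split: sum.splits)

lemma V_seq_rev [simp]: "V_seq (rev ps) = rev (V_seq ps)"
  by (induction ps) (auto simp: V_seq_def split: sum.splits)

lemma set_U_seq [simp]: "u \<in> set (U_seq ps) \<longleftrightarrow> Inl u \<in> set ps"
  by (induction ps) (auto simp: U_seq_def split: sum.splits)

lemma set_V_seq [simp]: "w \<in> set (V_seq ps) \<longleftrightarrow> Inr w \<in> set ps"
  by (induction ps) (auto simp: V_seq_def split: sum.splits)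

fun side_less :: "'u::linorder + 'v::linorder \<Rightarrow> 'u + 'v \<Rightarrow> bool" where
  "side_less (Inl a) (Inl b) \<longleftrightarrow> a < b"
| "side_less (Inr a) (Inr b) \<longleftrightarrow> a < b"
| "side_less _ _ \<longleftrightarrow> False"

definition same_side :: "'u + 'v \<Rightarrow> 'u + 'v \<Rightarrow> bool" where
  "same_side x y \<longleftrightarrow> isl x = isl y"

lemma same_side_refl: "same_side x x"
  and same_side_sym: "same_side x y \<Longrightarrow> same_side y x"
  and same_side_trans: "same_side x y \<Longrightarrow> same_side y z \<Longrightarrow> same_side x z"
  and not_same_side_trans: "\<not> same_side x y \<Longrightarrow> \<not> same_side y z \<Longrightarrow> same_side x z"
  by (auto simp: same_side_def)

lemma side_less_same_side: "side_less x y \<Longrightarrow> same_side x y"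
  by (cases x; cases y) (auto simp: same_side_def)

lemma side_less_trans: "side_less x y \<Longrightarrow> side_less y z \<Longrightarrow> side_less x z"
  by (cases x; cases y; cases z) auto

lemma side_less_asym: "side_less x y \<Longrightarrow> \<not> side_less y x"
  by (cases x; cases y) auto

lemma side_less_irrefl: "\<not> side_less x x"
  by (cases x) auto

lemma side_less_linear: "same_side x y \<Longrightarrow> x \<noteq> y \<Longrightarrow> side_less x y \<or> side_less y x"
  by (cases x; cases y) (auto simp: same_side_def)

lemma all_same_side_less_iff:
  "(\<forall>x\<in>X. \<forall>y\<in>Y. same_side x y \<longrightarrow> side_less y x) \<longleftrightarrow>
     (\<forall>a b. Inl a \<in> X \<longrightarrow> Inl b \<in> Y \<longrightarrow> b < a) \<and>
     (\<forall>a b. Inr a \<in> X \<longrightarrow> Inr b \<in> Y \<longrightarrow> b < a)"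
proof (intro iffI conjI allI impI ballI)
  fix x y
  assume "(\<forall>a b. Inl a \<in> X \<longrightarrow> Inl b \<in> Y \<longrightarrow> b < a) \<and>
     (\<forall>a b. Inr a \<in> X \<longrightarrow> Inr b \<in> Y \<longrightarrow> b < a)" "x \<in> X" "y \<in> Y" "same_side x y"
  then show "side_less y x" by (cases x; cases y) (auto simp: same_side_def)
qed (force simp: same_side_def)+

lemma decreasing_path_append:
  "decreasing_path (xs @ ys) \<longleftrightarrow> decreasing_path xs \<and> decreasing_path ys \<and>
     (\<forall>x\<in>set xs. \<forall>y\<in>set ys. same_side x y \<longrightarrow> side_less y x)"
  unfolding all_same_side_less_iff decreasing_path_def by (auto simp: sorted_wrt_append)

lemma decreasing_path_appendD: "decreasing_path (xs @ ys) \<Longrightarrow> decreasing_path xs"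
  by (simp add: decreasing_path_append)

lemma decreasing_path_singleton [simp]: "decreasing_path [x]"
  unfolding decreasing_path_def by (cases x) auto

lemma increasing_path_rev: "increasing_path (rev ps) \<longleftrightarrow> decreasing_path ps"
  unfolding decreasing_path_def increasing_path_def by (simp add: sorted_wrt_rev)

lemma decreasing_path_distinct: "decreasing_path ps \<Longrightarrow> distinct ps"
proof (induction ps)
  case (Cons x ps)
  then show ?case
    using decreasing_path_append[of "[x]" ps] side_less_irrefl same_side_refl by auto
qed simp

lemma decreasing_path_le_hd:
  assumes "decreasing_path ps" "x \<in> set ps" "same_side (hd ps) x"
  shows "x = hd ps \<or> side_less x (hd ps)"
  using assms decreasing_path_append[of "[hd ps]" "tl ps"]
  by (cases ps) auto

lemma decreasing_path_last_le:
  assumes "decreasing_path ps" "x \<in> set ps" "same_side (last ps) x"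
  shows "x = last ps \<or> side_less (last ps) x"
proof -
  obtain xs l where ps: "ps = xs @ [l]"
    using assms(2) by (cases ps rule: rev_cases) auto
  then show ?thesis
    using assms decreasing_path_append[of xs "[l]"] same_side_sym by auto
qed

lemma decreasing_path_snoc_below:
  assumes "decreasing_path (ps @ [a, x])" "\<not> same_side x y" "side_less y a"
  shows "decreasing_path (ps @ [a, x, y])"
proof -
  have "side_less y z" if "z \<in> set (ps @ [a, x])" "same_side z y" for z
  proof -
    have "z \<noteq> x" using that(2) assms(2) by auto
    moreover have "same_side a z"
      using that(2) assms(3) side_less_same_side same_side_sym same_side_trans by blast
    ultimately have "z = a \<or> side_less a z"
      using that(1) assms(1) decreasing_path_appendD[of "ps @ [a]" "[x]"]
        decreasing_path_last_le[of "ps @ [a]" z] by auto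
    then show ?thesis using assms(3) side_less_trans by blast
  qed
  then show ?thesis
    using assms(1) decreasing_path_append[of "ps @ [a, x]" "[y]"] by auto
qed

lemma linked_sym: "linked E x y \<Longrightarrow> linked E y x"
  unfolding linked_def by blast

lemma linked_not_same_side: "linked E x y \<Longrightarrow> \<not> same_side x y"
  unfolding linked_def same_side_def by auto

lemma linked_iff_edge_ends: "linked E x y \<longleftrightarrow> (\<exists>(u, w)\<in>E. {x, y} = {Inl u, Inr w})"
  unfolding linked_def by (auto simp: doubleton_eq_iff)

lemma is_path_snoc:
  assumes "ps \<noteq> []"
  shows "is_path E (ps @ [z]) \<longleftrightarrow> is_path E ps \<and> linked E (last ps) z"
proof
  assume h: "is_path E (ps @ [z])"
  have "is_path E ps" unfolding is_path_def
  proof (intro conjI allI impI)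
    show "ps \<noteq> []" by fact
    fix i assume "Suc i < length ps"
    with h have "linked E ((ps@[z]) ! i) ((ps@[z]) ! Suc i)" unfolding is_path_def by auto
    then show "linked E (ps ! i) (ps ! Suc i)" using \<open>Suc i < length ps\<close> by (simp add: nth_append)
  qed
  moreover have "linked E (last ps) z"
  proof -
    from assms obtain n where n: "length ps = Suc n" by (cases ps) auto
    with h have "linked E ((ps@[z]) ! n) ((ps@[z]) ! Suc n)" unfolding is_path_def by auto
    then show ?thesis using n assms by (simp add: nth_append last_conv_nth)
  qed
  ultimately show "is_path E ps \<and> linked E (last ps) z" by blast
next
  assume h: "is_path E ps \<and> linked E (last ps) z"
  show "is_path E (ps @ [z])" unfolding is_path_def
  proof (intro conjI allI impI)
    show "ps @ [z] \<noteq> []" by simp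
    fix i assume i: "Suc i < length (ps @ [z])"
    show "linked E ((ps @ [z]) ! i) ((ps @ [z]) ! Suc i)"
    proof (cases "Suc i < length ps")
      case True
      then show ?thesis using h by (simp add: nth_append is_path_def)
    next
      case False
      then have "Suc i = length ps" using i by simp
      then have "i = length ps - 1" "\<not> Suc i < length ps" by simp_all
      then show ?thesis using h assms by (simp add: nth_append last_conv_nth)
    qed
  qed
qed

lemma is_path_rev: "is_path E (rev ps) \<longleftrightarrow> is_path E ps"
proof -
  have "is_path E (rev ps)" if "is_path E ps" for ps :: "('a + 'b) list"
    unfolding is_path_def
  proof (intro conjI allI impI)
    show "rev ps \<noteq> []" using that by (simp add: is_path_def)
    fix i assume i: "Suc i < length (rev ps)"
    let ?j = "length ps - Suc (Suc i)"
    have "linked E (ps ! ?j) (ps ! Suc ?j)" using i that by (simp add: is_path_def)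
    moreover have "rev ps ! i = ps ! Suc ?j" "rev ps ! Suc i = ps ! ?j"
      using i by (simp_all add: rev_nth Suc_diff_Suc)
    ultimately show "linked E (rev ps ! i) (rev ps ! Suc i)" by (simp add: linked_sym)
  qed
  then show ?thesis by (metis rev_rev_ident)
qed

lemma is_path_take: "is_path E ps \<Longrightarrow> 0 < k \<Longrightarrow> is_path E (take k ps)"
  unfolding is_path_def by auto

lemma is_path_appendD: "is_path E (xs @ ys) \<Longrightarrow> xs \<noteq> [] \<Longrightarrow> is_path E xs"
  using is_path_take[of E "xs @ ys" "length xs"] by simp

definition decreasing_path_from_to ::
    "('u::linorder \<times> 'v::linorder) set \<Rightarrow> 'u + 'v \<Rightarrow> 'u + 'v \<Rightarrow> ('u + 'v) list \<Rightarrow> bool" where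
  "decreasing_path_from_to E v x q \<longleftrightarrow> is_path E q \<and> decreasing_path q \<and> hd q = v \<and> last q = x"

lemma decreasing_path_from_to_Nil [simp]: "\<not> decreasing_path_from_to E v x []"
  by (simp add: decreasing_path_from_to_def is_path_def)

lemma decreasing_path_from_to_self: "decreasing_path_from_to E v v [v]"
  by (simp add: decreasing_path_from_to_def is_path_def)

lemma decreasing_path_from_to_snoc:
  assumes "decreasing_path_from_to E v x (q @ [x])" "q \<noteq> []"
  shows "decreasing_path_from_to E v (last q) q" "linked E (last q) x"
  using assms is_path_snoc decreasing_path_appendD
  by (auto simp: decreasing_path_from_to_def)

lemma decreasing_path_from_to_snocI:
  "decreasing_path_from_to E v x q \<Longrightarrow> linked E x y \<Longrightarrow> decreasing_path (q @ [y])
    \<Longrightarrow> decreasing_path_from_to E v y (q @ [y])"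
  using is_path_snoc by (fastforce simp: decreasing_path_from_to_def is_path_def)

lemma decreasing_path_from_to_prefix:
  assumes "is_path E ps" "decreasing_path ps" "x \<in> set ps"
  shows "\<exists>q. decreasing_path_from_to E (hd ps) x q"
proof -
  obtain i where i: "i < length ps" "ps ! i = x"
    using assms(3) by (auto simp: in_set_conv_nth)
  let ?q = "take (Suc i) ps"
  have "is_path E ?q" using is_path_take[OF assms(1)] by simp
  moreover have "decreasing_path ?q"
    using assms(2) decreasing_path_appendD[of ?q "drop (Suc i) ps"] by simp
  moreover have "hd ?q = hd ps" using i by (cases ps) auto
  moreover have "last ?q = x" using i by (simp add: take_Suc_conv_app_nth)
  ultimately show ?thesis unfolding decreasing_path_from_to_def by blast
qed

section \<open>Decreasing paths in a PRBG\<close>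

text \<open>Such an edge is a back edge to the path, its second vertex \<open>b\<close> being non-terminal.\<close>

lemma PRBG_start_edge_beyond_range:
  assumes prbg: "PRBG U V E"
    and path: "is_path E (a # b # rest)" "increasing_path (a # b # rest)" "rest \<noteq> []"
    and edge: "linked E a z" "side_less b z"
    and range: "z' \<in> set (a # b # rest)" "z = z' \<or> side_less z z'"
  shows False
proof -
  let ?F = "a # b # rest"
  have fw: "forward_path E ?F" using path by (simp add: forward_path_def)
  have nt: "non_terminal ?F b"
    unfolding non_terminal_def using path(3) by (intro exI[of _ 1]) auto
  have sorted: "sorted_wrt (<) (U_seq ?F)" "sorted_wrt (<) (V_seq ?F)"
    using path(2) by (auto simp: increasing_path_def)
  show False
  proof (cases a)
    case (Inl s)
    from edge obtain w t where zw: "z = Inr w" "b = Inr t" "t < w" and e: "(s, w) \<in> E"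
      using Inl by (cases b) (auto simp: linked_def)
    obtain w' where "z' = Inr w'" "w \<le> w'"
      using range(2) zw by (cases z') auto
    then have "w \<le> Max (set (V_seq ?F))"
      using range(1) by (meson List.finite_set Max_ge order.trans set_V_seq)
    moreover have "Min (set (U_seq ?F)) = s" "Min (set (V_seq ?F)) = t"
      using sorted by (auto intro!: Min_eqI simp: Inl zw less_imp_le)
    ultimately have "back_edge ?F (s, w)"
      unfolding back_edge_def Let_def using zw nt by auto
    then show False using prbg fw e unfolding PRBG_def by blast
  next
    case (Inr s)
    from edge obtain w t where zw: "z = Inl w" "b = Inl t" "t < w" and e: "(w, s) \<in> E"
      using Inr by (cases b) (auto simp: linked_def)
    obtain w' where "z' = Inl w'" "w \<le> w'"
      using range(2) zw by (cases z') auto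
    then have "w \<le> Max (set (U_seq ?F))"
      using range(1) by (meson List.finite_set Max_ge order.trans set_U_seq)
    moreover have "Min (set (U_seq ?F)) = t" "Min (set (V_seq ?F)) = s"
      using sorted by (auto intro!: Min_eqI simp: Inr zw less_imp_le)
    ultimately have "back_edge ?F (w, s)"
      unfolding back_edge_def Let_def using zw nt by auto
    then show False using prbg fw e unfolding PRBG_def by blast
  qed
qed

text \<open>If \<open>v\<close> lies on the side of \<open>a\<close>, the edge \<open>x a\<close> is a back edge to the reversal
  \<open>x, b, \<dots>, v\<close> of the second path; otherwise the edge from \<open>b\<close> to its predecessor \<open>c\<close> is a
  back edge to the reversal \<open>b, x, a, \<dots>, v\<close> of the first path extended by \<open>b\<close>.\<close>

lemma PRBG_decreasing_paths_predecessor_not_less: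
  assumes prbg: "PRBG U V E"
    and P: "decreasing_path_from_to E v x (P @ [a, x])"
    and Q: "decreasing_path_from_to E v x (Q @ [b, x])"
    and ba: "side_less b a"
  shows False
proof -
  have pP: "is_path E (P @ [a, x])" "decreasing_path (P @ [a, x])" "hd (P @ [a, x]) = v"
    and pQ: "is_path E (Q @ [b, x])" "decreasing_path (Q @ [b, x])" "hd (Q @ [b, x]) = v"
    using P Q by (auto simp: decreasing_path_from_to_def)
  have ax: "linked E a x" and bx: "linked E b x"
    using is_path_snoc[of "P @ [a]" E x] is_path_snoc[of "Q @ [b]" E x] pP(1) pQ(1) by auto
  have "same_side a b" using ba side_less_same_side same_side_sym by blast
  have a_le_v: "a = v \<or> side_less a v" if "same_side v a"
    using decreasing_path_le_hd[OF pP(2), of a] that pP(3) by simp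
  show False
  proof (cases "same_side v a")
    case True
    have "Q \<noteq> []"
    proof
      assume "Q = []"
      then have "a = b \<or> side_less a b" using a_le_v[OF True] pQ(3) by simp
      then show False using ba side_less_asym side_less_irrefl by blast
    qed
    moreover have "is_path E (x # b # rev Q)" "increasing_path (x # b # rev Q)"
      using pQ is_path_rev[of E "Q @ [b, x]"] increasing_path_rev[of "Q @ [b, x]"] by simp_all
    moreover have "v \<in> set (x # b # rev Q)" using pQ(3) by (cases Q) auto
    ultimately show False
      using PRBG_start_edge_beyond_range[OF prbg _ _ _ linked_sym[OF ax] ba _ a_le_v[OF True]]
      by (metis Nil_is_rev_conv)
  next
    case False
    then have "Q \<noteq> []" using pQ(3) \<open>same_side a b\<close> same_side_sym by fastforce
    then obtain Q0 c where Q0: "Q = Q0 @ [c]" by (cases Q rule: rev_cases) auto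
    have cb: "linked E c b"
      using is_path_snoc[of "Q0 @ [c]" E b] pQ(1) Q0 is_path_appendD[of E "Q0 @ [c, b]"] by auto
    have "same_side x c"
      using bx cb linked_not_same_side not_same_side_trans same_side_sym by metis
    then have xc: "side_less x c"
      using pQ(2) Q0 decreasing_path_append[of "Q0 @ [c]" "[b, x]"] same_side_sym by auto
    have "same_side c v"
      using False \<open>same_side a b\<close> cb unfolding linked_def same_side_def by auto
    then have c_le_v: "c = v \<or> side_less c v"
      using decreasing_path_le_hd[OF pQ(2), of c] pQ(3) Q0 same_side_sym by auto
    have "decreasing_path (P @ [a, x, b])"
      using decreasing_path_snoc_below[OF pP(2)] ba linked_not_same_side[OF bx] same_side_sym
      by blast
    moreover have "is_path E (P @ [a, x, b])"
      using is_path_snoc[of "P @ [a, x]" E b] pP(1) linked_sym[OF bx] by simp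
    ultimately have "is_path E (b # x # a # rev P)" "increasing_path (b # x # a # rev P)"
      using is_path_rev[of E "P @ [a, x, b]"] increasing_path_rev[of "P @ [a, x, b]"] by simp_all
    moreover have "v \<in> set (b # x # a # rev P)" using pP(3) by (cases P) auto
    ultimately show False
      using PRBG_start_edge_beyond_range[OF prbg _ _ _ linked_sym[OF cb] xc _ c_le_v] by blast
  qed
qed

lemma PRBG_decreasing_paths_predecessor_eq:
  assumes prbg: "PRBG U V E"
    and P: "decreasing_path_from_to E v x (P @ [a, x])"
    and Q: "decreasing_path_from_to E v x (Q @ [b, x])"
  shows "a = b"
proof (rule ccontr)
  assume "a \<noteq> b"
  moreover have "linked E a x" "linked E b x"
    using decreasing_path_from_to_snoc(2)[of E v x "P @ [a]"]
      decreasing_path_from_to_snoc(2)[of E v x "Q @ [b]"] P Q by simp_all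
  then have "same_side a b"
    using linked_not_same_side not_same_side_trans same_side_sym by blast
  ultimately show False
    using side_less_linear PRBG_decreasing_paths_predecessor_not_less[OF prbg P Q]
      PRBG_decreasing_paths_predecessor_not_less[OF prbg Q P] by blast
qed

lemma decreasing_path_from_to_loop: "decreasing_path_from_to E x x q \<Longrightarrow> q = [x]"
  by (cases q) (auto simp: decreasing_path_from_to_def is_path_def
      dest!: decreasing_path_distinct dest: last_in_set split: if_splits)

theorem PRBG_decreasing_path_unique:
  assumes prbg: "PRBG U V E"
    and "decreasing_path_from_to E v x P" "decreasing_path_from_to E v x Q"
  shows "P = Q"
  using assms(2,3)
proof (induction P arbitrary: x Q rule: rev_induct)
  case (snoc y P)
  then have "y = x" by (simp add: decreasing_path_from_to_def)
  have "Q \<noteq> []" using snoc.prems(2) by auto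
  then obtain Q' where Q: "Q = Q' @ [x]"
    using snoc.prems(2) by (cases Q rule: rev_cases) (auto simp: decreasing_path_from_to_def)
  consider "P = []" | "Q' = []" | "P \<noteq> []" "Q' \<noteq> []" by blast
  then show ?case
  proof cases
    case 1
    then have "v = x" using snoc.prems(1) by (auto simp: decreasing_path_from_to_def)
    then show ?thesis
      using decreasing_path_from_to_loop snoc.prems 1 by (metis append_Nil)
  next
    case 2
    then have "v = x" using snoc.prems(2) Q by (auto simp: decreasing_path_from_to_def)
    then show ?thesis
      using decreasing_path_from_to_loop snoc.prems Q 2 by (metis append_Nil)
  next
    case 3
    then obtain P0 a Q0 b where PQ: "P = P0 @ [a]" "Q' = Q0 @ [b]"
      by (metis rev_exhaust)
    have "decreasing_path_from_to E v x (P0 @ [a, x])"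
      and "decreasing_path_from_to E v x (Q0 @ [b, x])"
      using snoc.prems \<open>y = x\<close> Q PQ by simp_all
    then have "a = b" using PRBG_decreasing_paths_predecessor_eq[OF prbg] by blast
    have "decreasing_path_from_to E v a P" "decreasing_path_from_to E v b Q'"
      using decreasing_path_from_to_snoc(1) snoc.prems \<open>y = x\<close> Q 3 PQ by fastforce+
    then have "P = Q'" using snoc.IH \<open>a = b\<close> by blast
    then show ?thesis using Q \<open>y = x\<close> by simp
  qed
qed simp

text \<open>Write \<open>Pb = Pb1 @ [d, b]\<close>. If \<open>Pb @ [a]\<close> is not decreasing, then \<open>d \<le> a\<close>.
  Equality gives \<open>Pa @ [b] = Pb\<close> by uniqueness, and \<open>d < a\<close> makes \<open>a b\<close> a back edge to the
  reversal \<open>b, d, \<dots>, v\<close> of \<open>Pb\<close>.\<close>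

lemma PRBG_decreasing_path_snoc_over_edge:
  assumes prbg: "PRBG U V E"
    and A: "decreasing_path_from_to E v a Pa" and B: "decreasing_path_from_to E v b Pb"
    and ab: "linked E a b" and va: "same_side v a"
  shows "decreasing_path (Pa @ [b]) \<or> decreasing_path (Pb @ [a])"
proof (rule ccontr)
  assume "\<not> ?thesis"
  then have not_A: "\<not> decreasing_path (Pa @ [b])" and not_B: "\<not> decreasing_path (Pb @ [a])"
    by blast+
  have a_le_v: "a = v \<or> side_less a v"
    using A va decreasing_path_le_hd[of Pa a] last_in_set[of Pa]
    by (auto simp: decreasing_path_from_to_def is_path_def)
  obtain Pb0 where Pb0: "Pb = Pb0 @ [b]"
    using B by (cases Pb rule: rev_cases) (auto simp: decreasing_path_from_to_def is_path_def)
  have "Pb0 \<noteq> []"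
    using B Pb0 va linked_not_same_side[OF ab] by (auto simp: decreasing_path_from_to_def same_side_def)
  then obtain Pb1 d where Pb1: "Pb = Pb1 @ [d, b]" using Pb0 by (cases Pb0 rule: rev_cases) auto
  have B0: "decreasing_path_from_to E v d (Pb1 @ [d])" and db: "linked E d b"
    using decreasing_path_from_to_snoc[of E v b "Pb1 @ [d]"] B Pb1 by auto
  have "same_side a d"
    using db ab linked_not_same_side not_same_side_trans same_side_sym by metis
  moreover have "\<not> side_less a d"
    using decreasing_path_snoc_below[of Pb1 d b a] B Pb1 not_B linked_not_same_side[OF ab]
      same_side_sym by (auto simp: decreasing_path_from_to_def)
  ultimately consider "d = a" | "side_less d a" using side_less_linear by blast
  then show False
  proof cases
    case 1
    then have "Pb1 @ [d] = Pa" using PRBG_decreasing_path_unique[OF prbg B0] A by simp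
    then have "Pa @ [b] = Pb" using Pb1 by simp
    then show False using not_A B by (simp add: decreasing_path_from_to_def)
  next
    case 2
    have "Pb1 \<noteq> []"
    proof
      assume "Pb1 = []"
      then have "d = v" using B0 by (simp add: decreasing_path_from_to_def)
      then show False using 2 a_le_v side_less_irrefl side_less_asym by metis
    qed
    moreover have "is_path E (b # d # rev Pb1)" "increasing_path (b # d # rev Pb1)"
      using B Pb1 is_path_rev[of E Pb] increasing_path_rev[of Pb]
      by (simp_all add: decreasing_path_from_to_def)
    moreover have "v \<in> set (b # d # rev Pb1)"
      using B Pb1 by (cases Pb1) (auto simp: decreasing_path_from_to_def)
    ultimately show False
      using PRBG_start_edge_beyond_range[OF prbg _ _ _ linked_sym[OF ab] 2 _ a_le_v]
      by (metis Nil_is_rev_conv)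
  qed
qed

theorem PRBG_decreasing_paths_over_edge:
  assumes prbg: "PRBG U V E"
    and A: "decreasing_path_from_to E v a Pa" and B: "decreasing_path_from_to E v b Pb"
    and ab: "linked E a b"
  shows "Pb = Pa @ [b] \<or> Pa = Pb @ [a]"
proof -
  have "same_side v a \<or> same_side v b"
    using ab linked_not_same_side not_same_side_trans by blast
  then have "decreasing_path (Pa @ [b]) \<or> decreasing_path (Pb @ [a])"
    using PRBG_decreasing_path_snoc_over_edge[OF prbg A B ab]
      PRBG_decreasing_path_snoc_over_edge[OF prbg B A linked_sym[OF ab]] by blast
  then show ?thesis
    using decreasing_path_from_to_snocI[OF A ab]
      decreasing_path_from_to_snocI[OF B linked_sym[OF ab]]
      PRBG_decreasing_path_unique[OF prbg] A B by blast
qed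

section \<open>The tree \<open>T\<^sub>r(v)\<close>\<close>

definition Tr_path :: "('u::linorder \<times> 'v::linorder) set \<Rightarrow> 'u + 'v \<Rightarrow> 'u + 'v \<Rightarrow> ('u + 'v) list"
  where "Tr_path E v x = (THE q. decreasing_path_from_to E v x q)"

lemma Tr_verts_iff: "x \<in> Tr_verts E v \<longleftrightarrow> (\<exists>q. decreasing_path_from_to E v x q)"
proof
  assume "x \<in> Tr_verts E v"
  then obtain ps where "is_path E ps" "hd ps = v" "decreasing_path ps" "x \<in> set ps"
    unfolding Tr_verts_def by blast
  then show "\<exists>q. decreasing_path_from_to E v x q"
    using decreasing_path_from_to_prefix by metis
next
  assume "\<exists>q. decreasing_path_from_to E v x q"
  then obtain q where "decreasing_path_from_to E v x q" by blast
  moreover from this have "q \<noteq> []" by auto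
  ultimately show "x \<in> Tr_verts E v"
    unfolding Tr_verts_def decreasing_path_from_to_def by auto
qed

definition Tr_child :: "('u::linorder \<times> 'v::linorder) set \<Rightarrow> 'u + 'v \<Rightarrow> 'u \<times> 'v \<Rightarrow> 'u + 'v"
  where "Tr_child E v e =
    (if length (Tr_path E v (Inl (fst e))) < length (Tr_path E v (Inr (snd e)))
     then Inr (snd e) else Inl (fst e))"

context
  fixes U V E
  assumes prbg: "PRBG U V E"
begin

lemma Tr_path_eq: "decreasing_path_from_to E v x q \<Longrightarrow> Tr_path E v x = q"
  unfolding Tr_path_def using PRBG_decreasing_path_unique[OF prbg] by blast

lemma decreasing_path_from_to_Tr_path:
  "x \<in> Tr_verts E v \<Longrightarrow> decreasing_path_from_to E v x (Tr_path E v x)"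
  using Tr_verts_iff Tr_path_eq by metis

lemma last_Tr_path: "x \<in> Tr_verts E v \<Longrightarrow> last (Tr_path E v x) = x"
  using decreasing_path_from_to_Tr_path by (simp add: decreasing_path_from_to_def)

lemma root_in_Tr_verts: "v \<in> Tr_verts E v"
  and Tr_path_root: "Tr_path E v v = [v]"
  using decreasing_path_from_to_self Tr_verts_iff Tr_path_eq by metis+

lemma Tr_path_parent:
  assumes "x \<in> Tr_verts E v" "x \<noteq> v"
  obtains y where "y \<in> Tr_verts E v" "linked E y x" "Tr_path E v x = Tr_path E v y @ [x]"
proof -
  have x: "decreasing_path_from_to E v x (Tr_path E v x)"
    using decreasing_path_from_to_Tr_path assms(1) .
  then obtain q where q: "Tr_path E v x = q @ [x]"
    by (cases "Tr_path E v x" rule: rev_cases) (auto simp: decreasing_path_from_to_def is_path_def)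
  have "q \<noteq> []" using x q assms(2) by (auto simp: decreasing_path_from_to_def)
  then have "decreasing_path_from_to E v (last q) q" "linked E (last q) x"
    using decreasing_path_from_to_snoc x q by metis+
  then show ?thesis using that q Tr_verts_iff Tr_path_eq by metis
qed

lemma finite_Tr_verts: "finite (Tr_verts E v)"
proof -
  have E: "E \<subseteq> U \<times> V" and fin: "finite U" "finite V" using prbg by (auto simp: PRBG_def)
  have "x \<in> insert v (Inl ` U \<union> Inr ` V)" if x: "x \<in> Tr_verts E v" for x
  proof (cases "x = v")
    case False
    then obtain y where "linked E y x" using Tr_path_parent x by blast
    with E show ?thesis unfolding linked_def by blast
  qed simp
  then show ?thesis using fin by (meson finite_Un finite_imageI finite_insert finite_subset subsetI)
qed

lemma Tr_child_edge:
  assumes e: "e \<in> induced_edges E (Tr_verts E v)"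
  obtains p where "p \<in> Tr_verts E v" "{Inl (fst e), Inr (snd e)} = {p, Tr_child E v e}"
    "Tr_path E v (Tr_child E v e) = Tr_path E v p @ [Tr_child E v e]"
proof -
  obtain u w where uw: "e = (u, w)" by fastforce
  have u: "Inl u \<in> Tr_verts E v" and w: "Inr w \<in> Tr_verts E v" and "(u, w) \<in> E"
    using e uw by (auto simp: induced_edges_def)
  then have "linked E (Inl u) (Inr w)" by (auto simp: linked_def)
  then have "Tr_path E v (Inr w) = Tr_path E v (Inl u) @ [Inr w] \<or>
             Tr_path E v (Inl u) = Tr_path E v (Inr w) @ [Inl u]"
    using PRBG_decreasing_paths_over_edge[OF prbg decreasing_path_from_to_Tr_path[OF u]
        decreasing_path_from_to_Tr_path[OF w]] by blast
  then show ?thesis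
  proof
    assume "Tr_path E v (Inr w) = Tr_path E v (Inl u) @ [Inr w]"
    then show ?thesis using that[of "Inl u"] u uw by (simp add: Tr_child_def)
  next
    assume "Tr_path E v (Inl u) = Tr_path E v (Inr w) @ [Inl u]"
    then show ?thesis using that[of "Inr w"] w uw by (simp add: Tr_child_def insert_commute)
  qed
qed

lemma Tr_child_in_Tr_verts:
  assumes "e \<in> induced_edges E (Tr_verts E v)"
  shows "Tr_child E v e \<in> Tr_verts E v - {v}"
proof -
  obtain p where p: "p \<in> Tr_verts E v" "{Inl (fst e), Inr (snd e)} = {p, Tr_child E v e}"
    "Tr_path E v (Tr_child E v e) = Tr_path E v p @ [Tr_child E v e]"
    using Tr_child_edge assms by blast
  have "Tr_child E v e \<in> Tr_verts E v"
    using assms p(2) by (auto simp: induced_edges_def doubleton_eq_iff)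
  moreover have "Tr_path E v p \<noteq> []" using decreasing_path_from_to_Tr_path[OF p(1)] by auto
  then have "Tr_child E v e \<noteq> v" using p(3) Tr_path_root by auto
  ultimately show ?thesis by blast
qed

lemma inj_on_Tr_child: "inj_on (Tr_child E v) (induced_edges E (Tr_verts E v))"
proof (rule inj_onI)
  fix e1 e2
  assume e: "e1 \<in> induced_edges E (Tr_verts E v)" "e2 \<in> induced_edges E (Tr_verts E v)"
    and eq: "Tr_child E v e1 = Tr_child E v e2"
  obtain p1 where p1: "p1 \<in> Tr_verts E v" "{Inl (fst e1), Inr (snd e1)} = {p1, Tr_child E v e1}"
    "Tr_path E v (Tr_child E v e1) = Tr_path E v p1 @ [Tr_child E v e1]"
    using Tr_child_edge e(1) by blast
  obtain p2 where p2: "p2 \<in> Tr_verts E v" "{Inl (fst e2), Inr (snd e2)} = {p2, Tr_child E v e2}"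
    "Tr_path E v (Tr_child E v e2) = Tr_path E v p2 @ [Tr_child E v e2]"
    using Tr_child_edge e(2) by blast
  have "Tr_path E v p1 = Tr_path E v p2" using p1(3) p2(3) eq by simp
  then have "p1 = p2" using last_Tr_path p1(1) p2(1) by metis
  then have "{Inl (fst e1), Inr (snd e1)} = {Inl (fst e2), Inr (snd e2)}"
    using p1(2) p2(2) eq by simp
  then show "e1 = e2" by (auto simp: doubleton_eq_iff prod_eq_iff)
qed

lemma Tr_child_image:
  "Tr_child E v ` induced_edges E (Tr_verts E v) = Tr_verts E v - {v}"
proof
  show "Tr_child E v ` induced_edges E (Tr_verts E v) \<subseteq> Tr_verts E v - {v}"
    using Tr_child_in_Tr_verts by (simp add: image_subset_iff)
next
  show "Tr_verts E v - {v} \<subseteq> Tr_child E v ` induced_edges E (Tr_verts E v)"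
  proof
    fix x assume x: "x \<in> Tr_verts E v - {v}"
    then obtain y where y: "y \<in> Tr_verts E v" "linked E y x"
      "Tr_path E v x = Tr_path E v y @ [x]"
      using Tr_path_parent by blast
    then obtain e where "e \<in> E" and ends: "{y, x} = {Inl (fst e), Inr (snd e)}"
      unfolding linked_iff_edge_ends by auto
    then have e: "e \<in> induced_edges E (Tr_verts E v)"
      using x y(1) by (auto simp: induced_edges_def doubleton_eq_iff)
    then obtain p where p: "{Inl (fst e), Inr (snd e)} = {p, Tr_child E v e}"
      "Tr_path E v (Tr_child E v e) = Tr_path E v p @ [Tr_child E v e]"
      using Tr_child_edge by blast
    have "Tr_child E v e = x"
    proof (rule ccontr)
      assume "Tr_child E v e \<noteq> x"
      then have "Tr_child E v e = y" "p = x" using ends p(1) by (auto simp: doubleton_eq_iff)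
      then have "length (Tr_path E v y) = length (Tr_path E v y) + 2" using p(2) y(3) by simp
      then show False by simp
    qed
    then show "x \<in> Tr_child E v ` induced_edges E (Tr_verts E v)" using e by blast
  qed
qed

lemma bij_betw_Tr_child:
  "bij_betw (Tr_child E v) (induced_edges E (Tr_verts E v)) (Tr_verts E v - {v})"
  using inj_on_Tr_child Tr_child_image by (rule bij_betw_imageI)

end

theorem lemma5:
  fixes U :: "'u::linorder set" and V :: "'v::linorder set" and E :: "('u \<times> 'v) set"
    and v :: "'u + 'v"
  assumes "PRBG U V E"
    and "v \<in> Inl ` U \<union> Inr ` V"
  shows "card (induced_edges E (Tr_verts E v)) = card (Tr_verts E v) - 1"
proof -
  have "card (induced_edges E (Tr_verts E v)) = card (Tr_verts E v - {v})"
    using bij_betw_same_card[OF bij_betw_Tr_child[OF assms(1)]] .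
  also have "\<dots> = card (Tr_verts E v) - 1"
    using finite_Tr_verts[OF assms(1)] root_in_Tr_verts[OF assms(1)] by simp
  finally show ?thesis .
qed

end
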